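(* Let $p\ge2$ and $p'$ be coprime positive integers, let $T_m$ denote the $m$-th Chebyshev polynomial of the first kind ($T_m(\cosh\tau)=\cosh(m\tau)$), and let $G^{(2)}_{\mathrm{cl.}}(\zeta,Q)$ be the semiclassical spectral polynomial described below. Then, up to normalisation, $$G^{(2)}_{\mathrm{cl.}}(\zeta,Q)=\begin{cases}\displaystyle\prod_{a=1}^{(p-1)/2}\left(T_p\Big(\frac{Q}{2\cos(\pi p'a/p)}\Big)-T_{p'}\big((-1)^a\zeta\big)\right), & p\text{ odd},\\[2ex] \displaystyle Q^{p/2}\prod_{a=1}^{(p-2)/2}\left(T_p\Big(\frac{Q}{2\cos(\pi p'a/p)}\Big)-T_{p'}\big((-1)^a\zeta\big)\right), & p\text{ even}.\end{cases}$$
   Context: $G^{(2)}_{\mathrm{cl.}}(\zeta,Q)$ is the $g_s\to0$ limit, in the conformal background, of the characteristic polynomial $\det\big(Q\,\mathbb{I}-\mathcal{Q}^{(2)}(t;\zeta)\big)$ of the $\binom p2\times\binom p2$ Lax matrix governing $\partial_\zeta$ of the vector of degree-$2$ generalised Wronskians of solutions of the $(p,p')$ system $\zeta\psi=\mathbb{P}\psi$, $\partial_\zeta\psi=\mathbb{Q}\psi$. Concretely, in this limit it is the polynomial in $Q$ of degree $p(p-1)/2$ whose zeros, for $\zeta=\cosh(p\tau)$, are $Q^{(j_1)}(\tau)+Q^{(j_2)}(\tau)$ for $1\le j_1<j_2\le p$, where $Q^{(j)}(\tau)=\cosh\big[p'(\tau-2\pi\mathrm{i}(j-1)/p)\big]$.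 *)

theory Defs
  imports "HOL-Analysis.Analysis"
begin

fun cheb_T :: "nat \<Rightarrow> complex \<Rightarrow> complex" where
  "cheb_T 0 x = 1"
| "cheb_T (Suc 0) x = x"
| "cheb_T (Suc (Suc n)) x = 2 * x * cheb_T (Suc n) x - cheb_T n x"

definition Qbranch :: "nat \<Rightarrow> nat \<Rightarrow> complex \<Rightarrow> nat \<Rightarrow> complex" where
  "Qbranch p p' \<tau> j =
     cosh (of_nat p' * (\<tau> - 2 * of_real pi * \<i> * (of_nat j - 1) / of_nat p))"

text \<open>The semiclassical spectral polynomial G^(2)_cl(zeta,Q): the monic polynomial in Q
  of degree p(p-1)/2 whose zeros are Q^(j1)(tau)+Q^(j2)(tau), 1 <= j1 < j2 <= p,
  where zeta = cosh(p tau) (tau some chosen preimage).\<close>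
definition G2cl :: "nat \<Rightarrow> nat \<Rightarrow> complex \<Rightarrow> complex \<Rightarrow> complex" where
  "G2cl p p' \<zeta> Q =
     (let \<tau> = (SOME t. cosh (of_nat p * t) = \<zeta>) in
      \<Prod>(j1, j2) \<in> {(j1, j2). 1 \<le> j1 \<and> j1 < j2 \<and> j2 \<le> p}.
         (Q - (Qbranch p p' \<tau> j1 + Qbranch p p' \<tau> j2)))"

end

(*
  Put \<theta> = 2\<pi>i p'/p, so that Q^(k+1)(\<tau>) = cosh(p'\<tau> - k\<theta>) and, since gcd(p,p') = 1,
  e^\<theta> is a primitive p-th root of unity.  Group the pairs j1 < j2 by their cyclic distance a.
  For 0 < 2a < p the addition formula gives
    Q^(k+1) + Q^(k+a+1) = 2 cos(\<pi>p'a/p) cosh(w_a + k\<theta>),   w_a = a\<theta>/2 - p'\<tau>,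
  and the product over k < p of x - cosh(w + k\<theta>) is (T_p(x) - cosh(p w)) / 2^(p-1): writing
  x = (y + 1/y)/2, each factor splits into two linear ones, and prod_k (y - d e^(k\<theta>)) = y^p - d^p.
  Finally cosh(p w_a) = T_p'((-1)^a cosh(p\<tau>)) = T_p'((-1)^a \<zeta>).  For even p the p/2 antipodal
  pairs satisfy Q^(k+1+p/2) = -Q^(k+1), as p' is odd, and contribute Q^(p/2).
*)

theory Submission
  imports Defs "HOL-Computational_Algebra.Fundamental_Theorem_Algebra" "HOL-Number_Theory.Cong"
begin

lemma cheb_T_mean_inverse:
  fixes y :: complex
  assumes "y \<noteq> 0" and "x = (y + inverse y) / 2"
  shows "cheb_T n x = (y ^ n + inverse y ^ n) / 2"
  using assms(2)
proof (induction n x rule: cheb_T.induct)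
  case (3 n x)
  then have IH: "cheb_T (Suc n) x = (y ^ Suc n + inverse y ^ Suc n) / 2"
    "cheb_T n x = (y ^ n + inverse y ^ n) / 2" by blast+
  have "cheb_T (Suc (Suc n)) x = 2 * x * cheb_T (Suc n) x - cheb_T n x" by simp
  also have "\<dots> = (y + inverse y) * ((y ^ Suc n + inverse y ^ Suc n) / 2) - (y ^ n + inverse y ^ n) / 2"
    unfolding IH by (simp add: 3(3))
  also have "\<dots> = (y ^ Suc (Suc n) + inverse y ^ Suc (Suc n)) / 2"
    using assms(1) by (simp add: field_simps)
  finally show ?case .
qed simp_all

lemma cheb_T_cosh: "cheb_T n (cosh z) = cosh (of_nat n * z)"
  using cheb_T_mean_inverse[of "exp z" "cosh z" n]
  by (simp add: cosh_field_def exp_minus exp_of_nat_mult power_inverse)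

lemma ex_mean_inverse_eq: "\<exists>y::complex. y \<noteq> 0 \<and> (y + inverse y) / 2 = x"
proof -
  define y where "y = x + csqrt (x\<^sup>2 - 1)"
  have "y * (x - csqrt (x\<^sup>2 - 1)) = 1"
    by (simp add: y_def algebra_simps power2_eq_square[symmetric])
  then have "y \<noteq> 0" and "inverse y = x - csqrt (x\<^sup>2 - 1)"
    by (auto intro: inverse_unique)
  then show ?thesis by (auto simp: y_def)
qed

lemma cosh_surj: "\<exists>z::complex. cosh z = w"
proof -
  obtain y :: complex where "y \<noteq> 0" "(y + inverse y) / 2 = w"
    using ex_mean_inverse_eq by blast
  then have "cosh (Ln y) = w" by (simp add: cosh_field_def exp_minus)
  then show ?thesis ..
qed

lemma exp_of_nat_mult_pi_i: "exp (of_nat n * (of_real pi * \<i>)) = (-1) ^ n"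
  by (simp add: exp_of_nat_mult)

lemma cosh_add_pi_i_multiple: "cosh (z + of_nat n * (of_real pi * \<i>)) = (-1) ^ n * cosh (z::complex)"
  using exp_of_nat_mult_pi_i[of n]
  by (simp add: cosh_field_def exp_add exp_diff exp_minus field_simps power_minus')

lemma cosh_diff_pi_i_multiple: "cosh (z - of_nat n * (of_real pi * \<i>)) = (-1) ^ n * cosh (z::complex)"
  using cosh_add_pi_i_multiple[of "- z" n] by (metis cosh_minus minus_diff_eq uminus_add_conv_diff)

lemma prod_diff_nth_roots:
  fixes c y :: complex
  assumes "c \<noteq> 0" and "n > 0"
  shows "(\<Prod>z | z ^ n = c. y - z) = y ^ n - c"
proof -
  define P where "P = [:-c:] + monom 1 n"
  have poly_P: "poly P z = z ^ n - c" for z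
    by (simp add: P_def poly_monom)
  have "lead_coeff P = 1"
    using assms unfolding P_def by (subst lead_coeff_add_le) (auto simp: degree_monom_eq)
  moreover have "rsquarefree P"
    unfolding rsquarefree_roots
  proof (intro allI notI)
    fix a assume "poly P a = 0 \<and> poly (pderiv P) a = 0"
    moreover have "poly (pderiv P) a = of_nat n * a ^ (n - 1)"
      by (simp add: P_def pderiv_add pderiv_monom poly_monom)
    ultimately show False
      using assms by (auto simp: poly_P)
  qed
  ultimately have decompose: "(\<Prod>z | poly P z = 0. [:-z, 1:]) = P"
    using complex_poly_decompose_rsquarefree by (metis smult_1_left)
  have "y ^ n - c = poly (\<Prod>z | poly P z = 0. [:-z, 1:]) y"
    by (simp only: decompose flip: poly_P)
  also have "\<dots> = (\<Prod>z | z ^ n = c. y - z)"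
    by (simp add: poly_prod poly_P)
  finally show ?thesis by simp
qed

lemma prod_diff_mult_primitive_root_powers:
  fixes \<omega> d y :: complex
  assumes "n > 0" and "\<omega> ^ n = 1" and "inj_on (\<lambda>k. \<omega> ^ k) {..<n}"
  shows "(\<Prod>k<n. y - d * \<omega> ^ k) = y ^ n - d ^ n"
proof (cases "d = 0")
  case True
  then show ?thesis using assms(1) by simp
next
  case False
  have inj: "inj_on (\<lambda>k. d * \<omega> ^ k) {..<n}"
    using assms(3) False by (auto simp: inj_on_def)
  have "(\<omega> ^ k) ^ n = (\<omega> ^ n) ^ k" for k
    by (simp flip: power_mult add: mult.commute)
  then have "(\<lambda>k. d * \<omega> ^ k) ` {..<n} \<subseteq> {z. z ^ n = d ^ n}"
    using assms(2) by (auto simp: power_mult_distrib)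
  moreover have "card ((\<lambda>k. d * \<omega> ^ k) ` {..<n}) = card {z. z ^ n = d ^ n}"
    using False assms(1) by (simp add: card_image[OF inj] card_nth_roots)
  ultimately have "bij_betw (\<lambda>k. d * \<omega> ^ k) {..<n} {z. z ^ n = d ^ n}"
    using inj assms(1) by (simp add: bij_betw_def card_subset_eq finite_nth_roots)
  then have "(\<Prod>k<n. y - d * \<omega> ^ k) = (\<Prod>z | z ^ n = d ^ n. y - z)"
    by (rule prod.reindex_bij_betw)
  also have "\<dots> = y ^ n - d ^ n"
    using False assms(1) by (simp add: prod_diff_nth_roots)
  finally show ?thesis .
qed

lemma prod_diff_cosh_progression:
  fixes \<theta> w x :: complex
  assumes "p > 0" and "exp (of_nat p * \<theta>) = 1"
    and "inj_on (\<lambda>k. exp (of_nat k * \<theta>)) {..<p}"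
  shows "(\<Prod>k<p. x - cosh (w + of_nat k * \<theta>))
       = (cheb_T p x - cosh (of_nat p * w)) / 2 ^ (p - 1)"
proof -
  define \<omega> e where "\<omega> = exp \<theta>" and "e = exp w"
  obtain y where "y \<noteq> 0" and x: "x = (y + inverse y) / 2"
    using ex_mean_inverse_eq by metis
  have "\<omega> \<noteq> 0" "e \<noteq> 0" by (simp_all add: \<omega>_def e_def)
  have root: "\<omega> ^ p = 1" and inj: "inj_on (\<lambda>k. \<omega> ^ k) {..<p}"
    using assms(2,3) by (simp_all add: \<omega>_def exp_of_nat_mult)
  then have root': "inverse \<omega> ^ p = 1" and inj': "inj_on (\<lambda>k. inverse \<omega> ^ k) {..<p}"
    by (simp_all add: power_inverse inj_on_def)
  have "x - cosh (w + of_nat k * \<theta>)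
      = (y - e * \<omega> ^ k) * (y - inverse e * inverse \<omega> ^ k) / (2 * y)" for k
  proof -
    have "exp (w + of_nat k * \<theta>) = e * \<omega> ^ k"
      by (simp add: e_def \<omega>_def exp_add exp_of_nat_mult)
    then show ?thesis
      unfolding cosh_field_def exp_minus x using \<open>y \<noteq> 0\<close> \<open>\<omega> \<noteq> 0\<close> \<open>e \<noteq> 0\<close>
      by (simp add: field_simps power_inverse)
  qed
  then have "(\<Prod>k<p. x - cosh (w + of_nat k * \<theta>))
      = (\<Prod>k<p. y - e * \<omega> ^ k) * (\<Prod>k<p. y - inverse e * inverse \<omega> ^ k) / (2 * y) ^ p"
    by (simp add: prod.distrib prod_dividef)
  also have "\<dots> = (y ^ p - e ^ p) * (y ^ p - inverse e ^ p) / (2 * y) ^ p"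
    using prod_diff_mult_primitive_root_powers[OF assms(1) root inj]
      prod_diff_mult_primitive_root_powers[OF assms(1) root' inj']
    by simp
  also have "\<dots> = ((y ^ p + inverse y ^ p) / 2 - (e ^ p + inverse e ^ p) / 2) / 2 ^ (p - 1)"
    using \<open>y \<noteq> 0\<close> \<open>e \<noteq> 0\<close> assms(1)
    by (simp add: field_simps power_inverse power_mult_distrib power_eq_if[of 2 p])
  also have "\<dots> = (cheb_T p x - cosh (of_nat p * w)) / 2 ^ (p - 1)"
    using cheb_T_mean_inverse[OF \<open>y \<noteq> 0\<close> x]
    by (simp add: cosh_field_def exp_minus e_def exp_of_nat_mult power_inverse)
  finally show ?thesis .
qed

definition Qbranch_shift :: "nat \<Rightarrow> nat \<Rightarrow> complex" where
  "Qbranch_shift p p' = 2 * of_real pi * \<i> * of_nat p' / of_nat p"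

lemma Qbranch_Suc: "Qbranch p p' \<tau> (Suc k) = cosh (of_nat p' * \<tau> - of_nat k * Qbranch_shift p p')"
  by (simp add: Qbranch_def Qbranch_shift_def algebra_simps)

lemma of_nat_mult_Qbranch_shift:
  assumes "p > 0"
  shows "of_nat p * Qbranch_shift p p' = of_nat (2 * p') * (of_real pi * \<i>)"
  using assms by (simp add: Qbranch_shift_def)

lemma exp_of_nat_mult_Qbranch_shift:
  assumes "p > 0"
  shows "exp (of_nat p * Qbranch_shift p p') = 1"
  by (simp only: of_nat_mult_Qbranch_shift[OF assms] exp_of_nat_mult_pi_i) simp

lemma inj_on_exp_Qbranch_shift:
  assumes "coprime p p'"
  shows "inj_on (\<lambda>k. exp (of_nat k * Qbranch_shift p p')) {..<p}"
proof (rule inj_onI)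
  fix k l assume k: "k \<in> {..<p}" and l: "l \<in> {..<p}"
    and "exp (of_nat k * Qbranch_shift p p') = exp (of_nat l * Qbranch_shift p p')"
  then have "exp (2 * of_real pi * \<i> * of_nat (p' * k) / of_nat p)
      = exp (2 * of_real pi * \<i> * of_nat (p' * l) / of_nat p)"
    using k by (simp add: Qbranch_shift_def mult_ac)
  then have "[p' * k = p' * l] (mod p)"
    using k complex_root_unity_eq[of p "p' * k" "p' * l"] by (simp add: cong_def)
  then have "[k = l] (mod p)"
    using assms by (simp add: cong_mult_lcancel_nat coprime_commute)
  then show "k = l"
    using k l by (simp add: cong_less_modulus_unique_nat)
qed

lemma Qbranch_periodic:
  assumes "p > 0"
  shows "Qbranch p p' \<tau> (Suc (k + p)) = Qbranch p p' \<tau> (Suc k)"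
proof -
  have "of_nat p' * \<tau> - of_nat (k + p) * Qbranch_shift p p'
      = of_nat p' * \<tau> - of_nat k * Qbranch_shift p p' - of_nat (2 * p') * (of_real pi * \<i>)"
    using of_nat_mult_Qbranch_shift[OF assms] by (simp add: algebra_simps)
  then show ?thesis
    by (simp only: Qbranch_Suc cosh_diff_pi_i_multiple) simp
qed

lemma Qbranch_antipodal:
  assumes "p > 0" and "even p" and "odd p'"
  shows "Qbranch p p' \<tau> (Suc (k + p div 2)) = - Qbranch p p' \<tau> (Suc k)"
proof -
  have "of_nat (p div 2) * Qbranch_shift p p' = of_nat p' * (of_real pi * \<i>)"
    using assms(1,2) by (auto simp: Qbranch_shift_def elim!: evenE)
  then have "of_nat p' * \<tau> - of_nat (k + p div 2) * Qbranch_shift p p'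
      = of_nat p' * \<tau> - of_nat k * Qbranch_shift p p' - of_nat p' * (of_real pi * \<i>)"
    by (simp add: algebra_simps)
  then show ?thesis
    using assms(3) by (simp only: Qbranch_Suc cosh_diff_pi_i_multiple) simp
qed

lemma Qbranch_pair_sum:
  "Qbranch p p' \<tau> (Suc k) + Qbranch p p' \<tau> (Suc (k + a))
     = 2 * cosh (of_nat a * Qbranch_shift p p' / 2)
         * cosh (of_nat a * Qbranch_shift p p' / 2 - of_nat p' * \<tau> + of_nat k * Qbranch_shift p p')"
proof -
  define D c where "D = of_nat a * Qbranch_shift p p' / 2"
    and "c = of_nat p' * \<tau> - of_nat k * Qbranch_shift p p' - D"
  have "Qbranch p p' \<tau> (Suc k) + Qbranch p p' \<tau> (Suc (k + a)) = cosh (c + D) + cosh (c - D)"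
    by (simp add: Qbranch_Suc c_def D_def algebra_simps)
  also have "\<dots> = 2 * cosh D * cosh (- c)"
    by (simp add: cosh_add cosh_diff)
  finally show ?thesis
    by (simp add: c_def D_def algebra_simps)
qed

lemma cosh_half_Qbranch_shift:
  "cosh (of_nat a * Qbranch_shift p p' / 2) = of_real (cos (pi * real p' * real a / real p))"
proof -
  have "cosh (of_nat a * Qbranch_shift p p' / 2) = cosh (\<i> * of_real (pi * real p' * real a / real p))"
    by (simp add: Qbranch_shift_def mult_ac)
  then show ?thesis
    by (simp add: cos_conv_cosh flip: cos_of_real)
qed

lemma cosh_half_multiple_nonzero:
  fixes \<theta> :: complex
  assumes "inj_on (\<lambda>k. exp (of_nat k * \<theta>)) {..<p}" and "0 < a" and "2 * a < p"
  shows "cosh (of_nat a * \<theta> / 2) \<noteq> 0"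
proof
  assume "cosh (of_nat a * \<theta> / 2) = 0"
  then have square: "exp (of_nat a * \<theta> / 2) ^ 2 = -1"
    by (simp add: cosh_zero_iff)
  have "exp (of_nat (2 * a) * \<theta>) = (exp (of_nat a * \<theta> / 2) ^ 2) ^ 2"
    by (simp flip: exp_of_nat_mult power_mult add: mult_ac)
  also have "\<dots> = exp (of_nat 0 * \<theta>)"
    by (simp add: square)
  finally have "exp (of_nat (2 * a) * \<theta>) = exp (of_nat 0 * \<theta>)" .
  then have "2 * a = 0"
    using assms(3) by (intro inj_onD[OF assms(1)]) auto
  with assms(2) show False by simp
qed

lemma cosh_pair_phase_eq_cheb_T:
  assumes "p > 0"
  shows "cosh (of_nat p * (of_nat a * Qbranch_shift p p' / 2 - of_nat p' * \<tau>))
         = cheb_T p' ((-1) ^ a * cosh (of_nat p * \<tau>))"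
proof -
  have "of_nat p * (of_nat a * Qbranch_shift p p' / 2 - of_nat p' * \<tau>)
      = - (of_nat p' * (of_nat p * \<tau>) - of_nat (p' * a) * (of_real pi * \<i>))"
    using of_nat_mult_Qbranch_shift[OF assms, of p'] by (simp add: algebra_simps)
  then have "cosh (of_nat p * (of_nat a * Qbranch_shift p p' / 2 - of_nat p' * \<tau>))
      = cosh (of_nat p' * (of_nat p * \<tau>) + of_nat (p' * a) * (of_real pi * \<i>))"
    by (simp only: cosh_minus cosh_diff_pi_i_multiple cosh_add_pi_i_multiple)
  also have "\<dots> = cheb_T p' ((-1) ^ a * cosh (of_nat p * \<tau>))"
    by (simp add: cheb_T_cosh flip: cosh_add_pi_i_multiple) (simp add: algebra_simps)
  finally show ?thesis .
qed

lemma cos_coprime_fraction_nonzero: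
  assumes "coprime p p'" and "0 < a" and "2 * a < p"
  shows "cos (pi * real p' * real a / real p) \<noteq> 0"
  using cosh_half_multiple_nonzero[OF inj_on_exp_Qbranch_shift[OF assms(1)] assms(2,3)]
  by (simp add: cosh_half_Qbranch_shift)

lemma Qbranch_pair_block:
  assumes "coprime p p'" and "0 < a" and "2 * a < p"
  defines "C \<equiv> complex_of_real (cos (pi * real p' * real a / real p))"
  shows "(\<Prod>k<p. Q - (Qbranch p p' \<tau> (Suc k) + Qbranch p p' \<tau> (Suc (k + a))))
       = (2 * C) ^ p / 2 ^ (p - 1)
         * (cheb_T p (Q / (2 * C)) - cheb_T p' ((-1) ^ a * cosh (of_nat p * \<tau>)))"
proof -
  define \<theta> where "\<theta> = Qbranch_shift p p'"
  define w where "w = of_nat a * \<theta> / 2 - of_nat p' * \<tau>"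
  have "p > 0" using assms(3) by simp
  have C: "C = cosh (of_nat a * \<theta> / 2)"
    by (simp add: C_def \<theta>_def cosh_half_Qbranch_shift)
  have "C \<noteq> 0"
    using cos_coprime_fraction_nonzero[OF assms(1-3)] by (simp add: C_def)
  have "(\<Prod>k<p. Q - (Qbranch p p' \<tau> (Suc k) + Qbranch p p' \<tau> (Suc (k + a))))
      = (\<Prod>k<p. 2 * C * (Q / (2 * C) - cosh (w + of_nat k * \<theta>)))"
    using \<open>C \<noteq> 0\<close> by (simp add: Qbranch_pair_sum C w_def \<theta>_def right_diff_distrib)
  also have "\<dots> = (2 * C) ^ p * (\<Prod>k<p. Q / (2 * C) - cosh (w + of_nat k * \<theta>))"
    by (simp add: prod.distrib)
  also have "(\<Prod>k<p. Q / (2 * C) - cosh (w + of_nat k * \<theta>))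
      = (cheb_T p (Q / (2 * C)) - cosh (of_nat p * w)) / 2 ^ (p - 1)"
    using \<open>p > 0\<close> exp_of_nat_mult_Qbranch_shift[OF \<open>p > 0\<close>]
      inj_on_exp_Qbranch_shift[OF assms(1)]
    unfolding \<theta>_def by (rule prod_diff_cosh_progression)
  also have "cosh (of_nat p * w) = cheb_T p' ((-1) ^ a * cosh (of_nat p * \<tau>))"
    unfolding w_def \<theta>_def using \<open>p > 0\<close> by (rule cosh_pair_phase_eq_cheb_T)
  finally show ?thesis by simp
qed

lemma Qbranch_antipodal_block:
  assumes "p > 0" and "even p" and "coprime p p'"
  shows "(\<Prod>k<p div 2. Q - (Qbranch p p' \<tau> (Suc k) + Qbranch p p' \<tau> (Suc (k + p div 2))))
       = Q ^ (p div 2)"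
proof -
  have "odd p'"
    using assms(2,3) by (auto simp: coprime_commute dest: coprime_common_divisor[of 2])
  then show ?thesis
    using assms(1,2) by (simp add: Qbranch_antipodal)
qed

(* (a, k) is the pair {k, k + a mod p}; the antipodal distance a = p/2 is taken once, via k < p/2. *)
lemma bij_betw_pairs_by_distance:
  fixes p :: nat
  shows "bij_betw (\<lambda>(a, k). if k + a < p then (k, k + a) else (k + a - p, k))
     ({(a, k). 0 < a \<and> 2 * a < p \<and> k < p} \<union> {(a, k). 2 * a = p \<and> k < a})
     {(i, j). i < j \<and> j < p}"
  by (rule bij_betw_byWitness[where
        f' = "\<lambda>(i, j). if 2 * (j - i) \<le> p then (j - i, i) else (p - (j - i), j)"])
    (auto split: if_splits)

lemma prod_pairs_by_distance:
  fixes g :: "nat \<Rightarrow> nat \<Rightarrow> 'a::comm_monoid_mult"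
  assumes "\<And>i j. g i j = g j i" and "\<And>i j. g (i + p) j = g i j"
  shows "(\<Prod>(i, j) \<in> {(i, j). i < j \<and> j < p}. g i j)
       = (\<Prod>a\<in>{1..(p - 1) div 2}. \<Prod>k<p. g k (k + a))
         * (if even p then \<Prod>k<p div 2. g k (k + p div 2) else 1)"
proof -
  define A E where "A = {(a, k). 0 < a \<and> 2 * a < p \<and> k < p}"
    and "E = {(a, k). 2 * a = p \<and> k < a}"
  have A: "A = {1..(p - 1) div 2} \<times> {..<p}"
    by (auto simp: A_def)
  have E: "E = (if even p then (\<lambda>k. (p div 2, k)) ` {..<p div 2} else {})"
    by (auto simp: E_def)
  have "g k (k + a) = g (k + a - p) k" if "\<not> k + a < p" for a k
    using assms that by (metis le_add_diff_inverse2 not_less)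
  then have "(\<Prod>(i, j) \<in> {(i, j). i < j \<and> j < p}. g i j)
      = (\<Prod>(a, k) \<in> A \<union> E. g k (k + a))"
    unfolding A_def E_def
    by (subst prod.reindex_bij_betw[OF bij_betw_pairs_by_distance, symmetric])
      (auto intro!: prod.cong)
  also have "\<dots> = (\<Prod>(a, k) \<in> A. g k (k + a)) * (\<Prod>(a, k) \<in> E. g k (k + a))"
    by (rule prod.union_disjoint) (auto simp: A E)
  also have "(\<Prod>(a, k) \<in> A. g k (k + a)) = (\<Prod>a\<in>{1..(p - 1) div 2}. \<Prod>k<p. g k (k + a))"
    unfolding A by (rule prod.cartesian_product[symmetric])
  also have "(\<Prod>(a, k) \<in> E. g k (k + a)) = (if even p then \<Prod>k<p div 2. g k (k + p div 2) else 1)"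
    by (simp add: E prod.reindex inj_on_def)
  finally show ?thesis .
qed

lemma G2cl_eq_prod_pairs:
  assumes "p > 0"
  obtains \<tau> where "cosh (of_nat p * \<tau>) = \<zeta>"
    and "G2cl p p' \<zeta> Q = (\<Prod>(i, j) \<in> {(i, j). i < j \<and> j < p}.
           Q - (Qbranch p p' \<tau> (Suc i) + Qbranch p p' \<tau> (Suc j)))"
proof
  define \<tau> where "\<tau> = (SOME t. cosh (of_nat p * t) = \<zeta>)"
  obtain z where "cosh z = \<zeta>" using cosh_surj by blast
  then have "cosh (of_nat p * (z / of_nat p)) = \<zeta>" using assms by simp
  then show "cosh (of_nat p * \<tau>) = \<zeta>"
    unfolding \<tau>_def by (rule someI)
  have "(j1, j2) \<in> map_prod Suc Suc ` {(i, j). i < j \<and> j < p}"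
    if "1 \<le> j1" "j1 < j2" "j2 \<le> p" for j1 j2
    using that by (intro image_eqI[of _ _ "(j1 - 1, j2 - 1)"]) auto
  then have "{(j1, j2). 1 \<le> j1 \<and> j1 < j2 \<and> j2 \<le> p} = map_prod Suc Suc ` {(i, j). i < j \<and> j < p}"
    by auto
  then show "G2cl p p' \<zeta> Q = (\<Prod>(i, j) \<in> {(i, j). i < j \<and> j < p}.
           Q - (Qbranch p p' \<tau> (Suc i) + Qbranch p p' \<tau> (Suc j)))"
    by (simp add: G2cl_def Let_def \<tau>_def prod.reindex inj_on_def case_prod_beta)
qed

lemma G2cl_factorisation:
  assumes "p > 0" and "coprime p p'"
  defines "C \<equiv> \<lambda>a. complex_of_real (cos (pi * real p' * real a / real p))"
  shows "G2cl p p' \<zeta> Q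
       = (\<Prod>a\<in>{1..(p - 1) div 2}. (2 * C a) ^ p / 2 ^ (p - 1)
           * (cheb_T p (Q / (2 * C a)) - cheb_T p' ((-1) ^ a * \<zeta>)))
         * (if even p then Q ^ (p div 2) else 1)"
proof -
  define g where "g \<tau> i j = Q - (Qbranch p p' \<tau> (Suc i) + Qbranch p p' \<tau> (Suc j))" for \<tau> i j
  obtain \<tau> where \<tau>: "cosh (of_nat p * \<tau>) = \<zeta>"
    and G: "G2cl p p' \<zeta> Q = (\<Prod>(i, j) \<in> {(i, j). i < j \<and> j < p}. g \<tau> i j)"
    unfolding g_def by (rule G2cl_eq_prod_pairs[OF assms(1)])
  have "(\<Prod>(i, j) \<in> {(i, j). i < j \<and> j < p}. g \<tau> i j)
      = (\<Prod>a\<in>{1..(p - 1) div 2}. \<Prod>k<p. g \<tau> k (k + a))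
        * (if even p then \<Prod>k<p div 2. g \<tau> k (k + p div 2) else 1)"
    by (rule prod_pairs_by_distance) (simp_all add: g_def Qbranch_periodic[OF assms(1)])
  also have "\<dots> = (\<Prod>a\<in>{1..(p - 1) div 2}. (2 * C a) ^ p / 2 ^ (p - 1)
          * (cheb_T p (Q / (2 * C a)) - cheb_T p' ((-1) ^ a * \<zeta>)))
        * (if even p then Q ^ (p div 2) else 1)"
    unfolding g_def \<tau>[symmetric] C_def using assms(1,2)
    by (intro arg_cong2[where f = times] prod.cong refl)
      (auto simp: Qbranch_pair_block Qbranch_antipodal_block)
  finally show ?thesis
    unfolding G .
qed

theorem proposition5p3p1:
  fixes p p' :: nat
  assumes "p \<ge> 2" and "p' \<ge> 1" and "coprime p p'"
  shows "\<exists>c::complex. c \<noteq> 0 \<and> (\<forall>\<zeta> Q.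
     G2cl p p' \<zeta> Q = c *
       (if odd p then
          (\<Prod>a\<in>{1..(p - 1) div 2}.
             cheb_T p (Q / (2 * of_real (cos (pi * real p' * real a / real p))))
             - cheb_T p' ((-1) ^ a * \<zeta>))
        else
          Q ^ (p div 2) *
          (\<Prod>a\<in>{1..(p - 2) div 2}.
             cheb_T p (Q / (2 * of_real (cos (pi * real p' * real a / real p))))
             - cheb_T p' ((-1) ^ a * \<zeta>))))"
proof -
  define C where "C a = complex_of_real (cos (pi * real p' * real a / real p))" for a
  define c where "c = (\<Prod>a\<in>{1..(p - 1) div 2}. (2 * C a) ^ p / 2 ^ (p - 1))"
  have "p > 0" using assms(1) by simp
  have "c \<noteq> 0"
    using cos_coprime_fraction_nonzero[OF assms(3)] by (auto simp: c_def C_def)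
  moreover have "G2cl p p' \<zeta> Q = c
      * (\<Prod>a\<in>{1..(p - 1) div 2}. cheb_T p (Q / (2 * C a)) - cheb_T p' ((-1) ^ a * \<zeta>))
      * (if even p then Q ^ (p div 2) else 1)" for \<zeta> Q
    using G2cl_factorisation[OF \<open>p > 0\<close> assms(3)] unfolding C_def c_def
    by (simp only: prod.distrib)
  moreover have "(p - 2) div 2 = (p - 1) div 2" if "even p"
    using assms(1) that by presburger
  ultimately show ?thesis
    by (intro exI[of _ c]) (simp add: C_def)
qed

end
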